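(* Let $\mathcal M_\bullet=(B,\sigma,\alpha,b_\bullet)$ be a rooted map, let $S$ be (the edge set of) a spanning tree of $G(\mathcal M)$, and let $w$ be the associated double occurrence word. Then $S$ has the Trémaux property if and only if no edge $f$ has both an in-neighbor in $S$ and an out-neighbor in $S$ in $\vec{\Lambda}(w)$; equivalently, if and only if $w$ does not contain (as a subsequence) a pattern $e_1\,f\,e_1\,e_2\,f\,e_2$ with $e_1,e_2\in S$.
   Context: A map is a triple $\mathcal M=(B,\sigma,\alpha)$ with $B$ finite, $\sigma,\alpha\in\mathrm{Sym}(B)$, $\alpha$ a fixed-point-free involution, $\langle\sigma,\alpha\rangle$ transitive on $B$; a rooted map additionally has a root flag $b_\bullet\in B$. Edges are the cycles of $\alpha$; $\underline b=\{b,\alpha(b)\}$. The underlying graph $G(\mathcal M)$ has vertex set the cycles of $\sigma$, edge set the cycles of $\alpha$, $e$ incident to $v$ iff $e\cap v\neq\emptyset$. The tour of a set $F$ of edges is $\tau$ with $\tau(b)=\sigma(\alpha(b))$ if $\underline b\in F$ and $\tau(b)=\sigma(b)$ otherwise; for a spanning tree $S$, its tour $\tau$ is a single cycle on $B$, and the associated double occurrence word is $w=\underline{b_\bullet}\,\underline{\tau(b_\bullet)}\,\underline{\tau^2(b_\bullet)}\cdots\underline{\tau^{|B|-1}(b_\bullet)}$, a word on the alphabet of edges using each edge exactly twice. $\vec\Lambda(w)$ is the directed graph on the letters of $w$ with an arc $e\to f$ whenever $e\,f\,e\,f$ is a subsequence of $w$. $S$ has the Trémaux property if, rooting the tree $S$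 at the vertex (cycle of $\sigma$) containing $b_\bullet$, for every edge of $G(\mathcal M)$ its two end vertices lie on a common path from the root towards a leaf of $S$ (i.e. one is an ancestor of the other). *)

theory Defs
  imports Main "HOL-Combinatorics.Permutations" "HOL-Library.Sublist"
begin

definition is_map :: "'b set \<Rightarrow> ('b \<Rightarrow> 'b) \<Rightarrow> ('b \<Rightarrow> 'b) \<Rightarrow> bool" where
  "is_map B \<sigma> \<alpha> \<longleftrightarrow> finite B \<and> \<sigma> permutes B \<and> \<alpha> permutes B \<and>
     (\<forall>b\<in>B. \<alpha> b \<noteq> b \<and> \<alpha> (\<alpha> b) = b) \<and>
     (\<forall>x\<in>B. \<forall>y\<in>B. (x, y) \<in>
        ({(b, \<sigma> b) | b. b \<in> B} \<union> {(b, \<alpha> b) | b. b \<in> B}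
         \<union> {(\<sigma> b, b) | b. b \<in> B} \<union> {(\<alpha> b, b) | b. b \<in> B})\<^sup>*)"

definition edge_of :: "('b \<Rightarrow> 'b) \<Rightarrow> 'b \<Rightarrow> 'b set" where
  "edge_of \<alpha> b = {b, \<alpha> b}"

definition vertex_of :: "('b \<Rightarrow> 'b) \<Rightarrow> 'b \<Rightarrow> 'b set" where
  "vertex_of \<sigma> b = {(\<sigma> ^^ n) b | n. True}"

definition map_edges :: "'b set \<Rightarrow> ('b \<Rightarrow> 'b) \<Rightarrow> 'b set set" where
  "map_edges B \<alpha> = edge_of \<alpha> ` B"

definition map_vertices :: "'b set \<Rightarrow> ('b \<Rightarrow> 'b) \<Rightarrow> 'b set set" where
  "map_vertices B \<sigma> = vertex_of \<sigma> ` B"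

definition adj :: "'b set \<Rightarrow> ('b \<Rightarrow> 'b) \<Rightarrow> ('b \<Rightarrow> 'b) \<Rightarrow> 'b set set \<Rightarrow> ('b set \<times> 'b set) set" where
  "adj B \<sigma> \<alpha> F = {(vertex_of \<sigma> b, vertex_of \<sigma> (\<alpha> b)) | b. b \<in> B \<and> edge_of \<alpha> b \<in> F}"

text \<open>Spanning tree of the (multi)graph G(M): a set of edges that is connected and
spanning, and acyclic (every edge of it is a bridge: removing it disconnects its ends;
loops are thereby excluded).\<close>
definition spanning_tree :: "'b set \<Rightarrow> ('b \<Rightarrow> 'b) \<Rightarrow> ('b \<Rightarrow> 'b) \<Rightarrow> 'b set set \<Rightarrow> bool" where
  "spanning_tree B \<sigma> \<alpha> S \<longleftrightarrow> S \<subseteq> map_edges B \<alpha> \<and>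
     (\<forall>u\<in>map_vertices B \<sigma>. \<forall>v\<in>map_vertices B \<sigma>. (u, v) \<in> (adj B \<sigma> \<alpha> S)\<^sup>*) \<and>
     (\<forall>b\<in>B. edge_of \<alpha> b \<in> S \<longrightarrow>
        (vertex_of \<sigma> b, vertex_of \<sigma> (\<alpha> b)) \<notin> (adj B \<sigma> \<alpha> (S - {edge_of \<alpha> b}))\<^sup>*)"

definition tour :: "('b \<Rightarrow> 'b) \<Rightarrow> ('b \<Rightarrow> 'b) \<Rightarrow> 'b set set \<Rightarrow> 'b \<Rightarrow> 'b" where
  "tour \<sigma> \<alpha> F b = (if edge_of \<alpha> b \<in> F then \<sigma> (\<alpha> b) else \<sigma> b)"

definition dow :: "'b set \<Rightarrow> ('b \<Rightarrow> 'b) \<Rightarrow> ('b \<Rightarrow> 'b) \<Rightarrow> 'b \<Rightarrow> 'b set set \<Rightarrow> 'b set list" where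
  "dow B \<sigma> \<alpha> r F = map (\<lambda>i. edge_of \<alpha> ((tour \<sigma> \<alpha> F ^^ i) r)) [0..<card B]"

definition Lambda_arc :: "'a list \<Rightarrow> 'a \<Rightarrow> 'a \<Rightarrow> bool" where
  "Lambda_arc w e f \<longleftrightarrow> subseq [e, f, e, f] w"

definition is_path :: "('v \<times> 'v) set \<Rightarrow> 'v \<Rightarrow> 'v \<Rightarrow> 'v list \<Rightarrow> bool" where
  "is_path R u v ps \<longleftrightarrow> ps \<noteq> [] \<and> hd ps = u \<and> last ps = v \<and> distinct ps \<and>
     (\<forall>i. Suc i < length ps \<longrightarrow> (ps ! i, ps ! Suc i) \<in> R)"

definition ancestor :: "'b set \<Rightarrow> ('b \<Rightarrow> 'b) \<Rightarrow> ('b \<Rightarrow> 'b) \<Rightarrow> 'b set set \<Rightarrow> 'b set \<Rightarrow> 'b set \<Rightarrow> 'b set \<Rightarrow> bool" where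
  "ancestor B \<sigma> \<alpha> S root x y \<longleftrightarrow>
     (\<exists>ps. is_path (adj B \<sigma> \<alpha> S) root y ps \<and> x \<in> set ps)"

definition tremaux :: "'b set \<Rightarrow> ('b \<Rightarrow> 'b) \<Rightarrow> ('b \<Rightarrow> 'b) \<Rightarrow> 'b \<Rightarrow> 'b set set \<Rightarrow> bool" where
  "tremaux B \<sigma> \<alpha> r S \<longleftrightarrow>
     (\<forall>b\<in>B. ancestor B \<sigma> \<alpha> S (vertex_of \<sigma> r) (vertex_of \<sigma> b) (vertex_of \<sigma> (\<alpha> b)) \<or>
            ancestor B \<sigma> \<alpha> S (vertex_of \<sigma> r) (vertex_of \<sigma> (\<alpha> b)) (vertex_of \<sigma> b))"

end

theory Submission
  imports Defs "HOL-Combinatorics.Cycles" "HOL-Combinatorics.Orbits" "HOL-Library.Transitive_Closure_Table"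
begin

text \<open>Deleting a tree edge e cuts off a subtree from the root. The tour enters this subtree by
crossing e downwards, then runs through all flags of the subtree and nothing else, and leaves it by
crossing e back; so the flags below e form a contiguous block of the tour, bracketed by the two
occurrences of e in the word. A vertex u is an ancestor of v iff every subtree containing u contains
v. Hence S is not Tremaux iff some edge b has one end in a subtree T1 not containing its other end,
and that other end in a subtree T2 not containing the first. Such T1 and T2 are disjoint by
laminarity, which in the word reads e1 b e1 e2 b e2; conversely, arcs e1 \<rightarrow> f \<rightarrow> e2 in Lambda(w)
place the two ends of f in this way.\<close>

lemma subseq_Cons_iff_nth:
  "subseq (x # xs) ys \<longleftrightarrow> (\<exists>i<length ys. ys ! i = x \<and> subseq xs (drop (Suc i) ys))"
proof
  assume "subseq (x # xs) ys"
  then obtain us vs where "ys = us @ x # vs" "subseq xs vs"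
    by (auto dest: list_emb_ConsD)
  then show "\<exists>i<length ys. ys ! i = x \<and> subseq xs (drop (Suc i) ys)"
    by (intro exI[of _ "length us"]) auto
next
  assume "\<exists>i<length ys. ys ! i = x \<and> subseq xs (drop (Suc i) ys)"
  then obtain i where "i < length ys" "ys ! i = x" "subseq xs (drop (Suc i) ys)" by blast
  then have "subseq (x # xs) (take i ys @ ys ! i # drop (Suc i) ys)" by (simp add: subseq_drop_many)
  then show "subseq (x # xs) ys" using \<open>i < length ys\<close> by (simp add: id_take_nth_drop[symmetric])
qed

lemma subseq_iff_nth_indices:
  "subseq xs ys \<longleftrightarrow> (\<exists>ks. sorted_wrt (<) ks \<and> (\<forall>i\<in>set ks. i < length ys) \<and> map ((!) ys) ks = xs)"
proof (induction xs arbitrary: ys)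
  case Nil
  then show ?case by (auto intro: exI[of _ "[]"])
next
  case (Cons x xs)
  show ?case
  proof
    assume "subseq (x # xs) ys"
    then obtain i js where i: "i < length ys" "ys ! i = x"
      and js: "sorted_wrt (<) js" "\<forall>j\<in>set js. j < length ys - Suc i" "map ((!) (drop (Suc i) ys)) js = xs"
      by (auto simp: subseq_Cons_iff_nth Cons.IH)
    show "\<exists>ks. sorted_wrt (<) ks \<and> (\<forall>i\<in>set ks. i < length ys) \<and> map ((!) ys) ks = x # xs"
      using i js by (intro exI[of _ "i # map ((+) (Suc i)) js"]) (auto simp: sorted_wrt_map)
  next
    assume "\<exists>ks. sorted_wrt (<) ks \<and> (\<forall>i\<in>set ks. i < length ys) \<and> map ((!) ys) ks = x # xs"
    then obtain i ks where sorted: "sorted_wrt (<) (i # ks)" and bounded: "\<forall>j\<in>set (i # ks). j < length ys"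
      and "ys ! i = x" "map ((!) ys) ks = xs" by auto
    define js where "js = map (\<lambda>j. j - Suc i) ks"
    have above: "\<forall>j\<in>set ks. Suc i \<le> j" using sorted by auto
    have "sorted_wrt (<) js"
      unfolding js_def sorted_wrt_map
      by (rule sorted_wrt_mono_rel[of _ "(<)"]) (use sorted above in auto)
    moreover have "\<forall>j\<in>set js. j < length (drop (Suc i) ys)"
      using bounded above by (force simp: js_def intro: diff_less_mono)
    moreover have "map ((!) (drop (Suc i) ys)) js = xs"
      using \<open>map ((!) ys) ks = xs\<close> above bounded by (fastforce simp: js_def)
    ultimately show "subseq (x # xs) ys"
      unfolding subseq_Cons_iff_nth Cons.IH using bounded \<open>ys ! i = x\<close> by auto
  qed
qed

lemma subseq_pattern_imp_Lambda_arcs: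
  assumes "subseq [e1, f, e1, e2, f, e2] w"
  shows "Lambda_arc w e1 f" and "Lambda_arc w f e2"
proof -
  have "subseq [e1, f, e1, f] [e1, f, e1, e2, f, e2]" "subseq [f, e2, f, e2] [e1, f, e1, e2, f, e2]"
    unfolding subseq_iff_nth_indices
    by (intro exI[of _ "[0, 1, 2, 4]"], simp) (intro exI[of _ "[1, 3, 4, 5]"], simp)
  then show "Lambda_arc w e1 f" "Lambda_arc w f e2"
    using assms subseq_order.trans unfolding Lambda_arc_def by blast+
qed

lemma rtrancl_path_nth:
  assumes "rtrancl_path (\<lambda>u v. (u, v) \<in> R) x xs y"
  shows "last (x # xs) = y \<and> (\<forall>i. Suc i < length (x # xs) \<longrightarrow> ((x # xs) ! i, (x # xs) ! Suc i) \<in> R)"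
  using assms by induction (auto simp: nth_Cons split: nat.split)

lemma rtrancl_imp_is_path:
  assumes "(x, y) \<in> R\<^sup>*"
  obtains ps where "is_path R x y ps"
proof -
  obtain xs where "rtrancl_path (\<lambda>u v. (u, v) \<in> R) x xs y"
    using assms by (auto simp: rtrancl_def rtranclp_eq_rtrancl_path)
  then obtain xs' where "rtrancl_path (\<lambda>u v. (u, v) \<in> R) x xs' y" "distinct (x # xs')"
    by (rule rtrancl_path_distinct)
  then have "is_path R x y (x # xs')"
    using rtrancl_path_nth unfolding is_path_def by fastforce
  then show thesis by (rule that)
qed

lemma rtrancl_chain:
  assumes "\<And>k. k < n \<Longrightarrow> (f k, f (Suc k)) \<in> R"
  shows "(f 0, f n) \<in> R\<^sup>*"
  using assms by (induction n) (auto intro: rtrancl_into_rtrancl)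

lemma funpow_image_atMost_Suc:
  "(\<lambda>j. (f ^^ j) x) ` {..Suc n} = insert x ((\<lambda>j. (f ^^ j) (f x)) ` {..n})"
  unfolding atMost_Suc_eq_insert_0 image_insert image_image
  by (simp add: funpow_Suc_right del: funpow.simps(2))

lemma funpow_image_atMost_add:
  "(\<lambda>j. (f ^^ j) x) ` {..m + n} = (\<lambda>j. (f ^^ j) x) ` {..m} \<union> (\<lambda>j. (f ^^ j) ((f ^^ m) x)) ` {..n}"
  by (induction m arbitrary: x) (force, simp add: funpow_image_atMost_Suc funpow_swap1)

lemma nat_crossing:
  assumes "\<not> P i" "P j" "i \<le> j"
  shows "\<exists>k. i \<le> k \<and> k < j \<and> \<not> P k \<and> P (Suc k)"
proof -
  obtain k where "k < j - i" "\<not> P (i + k)" "P (Suc (i + k))"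
    using ex_least_nat_less[of "\<lambda>k. P (i + k)" "j - i"] assms by auto
  then show ?thesis by (intro exI[of _ "i + k"]) simp
qed

section \<open>Subtrees of a rooted spanning tree\<close>

locale rooted_spanning_tree =
  fixes B :: "'b set" and \<sigma> \<alpha> :: "'b \<Rightarrow> 'b" and r :: 'b and S :: "'b set set"
  assumes map: "is_map B \<sigma> \<alpha>" and root_flag: "r \<in> B" and tree: "spanning_tree B \<sigma> \<alpha> S"
begin

abbreviation vt where "vt \<equiv> vertex_of \<sigma>"
abbreviation ed where "ed \<equiv> edge_of \<alpha>"
abbreviation Adj where "Adj \<equiv> adj B \<sigma> \<alpha>"
abbreviation root where "root \<equiv> vertex_of \<sigma> r"

lemma finite_flags: "finite B"
  and sigma_permutes: "\<sigma> permutes B"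
  and alpha_permutes: "\<alpha> permutes B"
  and alpha_alpha: "x \<in> B \<Longrightarrow> \<alpha> (\<alpha> x) = x"
  and alpha_neq: "x \<in> B \<Longrightarrow> \<alpha> x \<noteq> x"
  using map unfolding is_map_def by blast+

lemma alpha_in: "x \<in> B \<Longrightarrow> \<alpha> x \<in> B"
  by (simp add: permutes_in_image[OF alpha_permutes])

lemma sigma_in: "x \<in> B \<Longrightarrow> \<sigma> x \<in> B"
  by (simp add: permutes_in_image[OF sigma_permutes])

lemma funpow_sigma_in: "x \<in> B \<Longrightarrow> (\<sigma> ^^ n) x \<in> B"
  by (induction n) (auto simp: sigma_in)

lemma edge_alpha: "x \<in> B \<Longrightarrow> ed (\<alpha> x) = ed x"
  by (auto simp: edge_of_def alpha_alpha)

lemma edge_eq_iff: "x \<in> B \<Longrightarrow> y \<in> B \<Longrightarrow> ed y = ed x \<longleftrightarrow> y = x \<or> y = \<alpha> x"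
  unfolding edge_of_def using alpha_alpha by (auto simp: doubleton_eq_iff)

lemma tree_edge_flag_in: "ed x \<in> S \<Longrightarrow> x \<in> B"
proof (rule ccontr)
  assume "ed x \<in> S" "x \<notin> B"
  then have "ed x = {x}" using alpha_permutes by (simp add: edge_of_def permutes_not_in)
  moreover obtain y where "y \<in> B" "ed x = ed y"
    using \<open>ed x \<in> S\<close> tree by (auto simp: spanning_tree_def map_edges_def)
  ultimately show False using \<open>x \<notin> B\<close> by (auto simp: edge_of_def)
qed

lemma adj_iff: "(p, q) \<in> Adj F \<longleftrightarrow> (\<exists>b\<in>B. ed b \<in> F \<and> p = vt b \<and> q = vt (\<alpha> b))"
  by (auto simp: adj_def)

lemma adjI: "b \<in> B \<Longrightarrow> ed b \<in> F \<Longrightarrow> (vt b, vt (\<alpha> b)) \<in> Adj F"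
  unfolding adj_iff by blast

lemma adj_sym: "(p, q) \<in> Adj F \<Longrightarrow> (q, p) \<in> Adj F"
  unfolding adj_iff by (metis alpha_in alpha_alpha edge_alpha)

lemma adj_rtrancl_alpha_step:
  assumes "y \<in> B" "ed y \<in> F" "(p, vt (\<alpha> y)) \<in> (Adj F)\<^sup>*"
  shows "(p, vt y) \<in> (Adj F)\<^sup>*"
proof -
  have "(vt (\<alpha> y), vt y) \<in> Adj F"
    using adjI[of "\<alpha> y" F] assms(1,2) by (simp add: alpha_in alpha_alpha edge_alpha)
  with assms(3) show ?thesis by (rule rtrancl_into_rtrancl)
qed

lemma adj_rtrancl_sym: "(p, q) \<in> (Adj F)\<^sup>* \<Longrightarrow> (q, p) \<in> (Adj F)\<^sup>*"
  by (induction rule: rtrancl_induct) (auto intro: converse_rtrancl_into_rtrancl adj_sym)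

lemma adj_rtrancl_mono: "(p, q) \<in> (Adj F)\<^sup>* \<Longrightarrow> F \<subseteq> G \<Longrightarrow> (p, q) \<in> (Adj G)\<^sup>*"
  using rtrancl_mono[of "Adj F" "Adj G"] by (auto simp: adj_def)

lemma tree_connected: "x \<in> B \<Longrightarrow> y \<in> B \<Longrightarrow> (vt x, vt y) \<in> (Adj S)\<^sup>*"
  using tree by (simp add: spanning_tree_def map_vertices_def)

lemma tree_edge_bridge: "b \<in> B \<Longrightarrow> ed b \<in> S \<Longrightarrow> (vt b, vt (\<alpha> b)) \<notin> (Adj (S - {ed b}))\<^sup>*"
  using tree by (simp add: spanning_tree_def)

lemma adj_rtrancl_remove_edge:
  assumes "y \<in> B" "(p, q) \<in> (Adj F)\<^sup>*"
  shows "(p, q) \<in> (Adj (F - {ed y}))\<^sup>* \<or> (p, vt y) \<in> (Adj (F - {ed y}))\<^sup>* \<or>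
    (p, vt (\<alpha> y)) \<in> (Adj (F - {ed y}))\<^sup>*"
  using assms(2)
proof (induction rule: rtrancl_induct)
  case (step q' q)
  obtain b where b: "b \<in> B" "ed b \<in> F" "q' = vt b" "q = vt (\<alpha> b)"
    using step(2) adj_iff by blast
  show ?case
  proof (cases "ed b = ed y")
    case True
    then have "q' = vt y \<or> q' = vt (\<alpha> y)" using b edge_eq_iff assms(1) by blast
    then show ?thesis using step.IH by auto
  next
    case False
    then have "(q', q) \<in> Adj (F - {ed y})" using adjI[of b] b by auto
    then show ?thesis using step.IH by (meson rtrancl.rtrancl_into_rtrancl)
  qed
qed simp

definition below :: "'b set \<Rightarrow> 'b set set" where
  "below e = {u. (root, u) \<notin> (Adj (S - {e}))\<^sup>*}"

definition flags_below :: "'b set \<Rightarrow> 'b set" where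
  "flags_below e = {x \<in> B. vt x \<in> below e}"

definition down_flag :: "'b \<Rightarrow> bool" where
  "down_flag a \<longleftrightarrow> a \<in> B \<and> ed a \<in> S \<and> vt a \<in> below (ed a)"

lemma root_not_below: "root \<notin> below e"
  by (simp add: below_def)

lemma below_cong: "(p, q) \<in> (Adj (S - {e}))\<^sup>* \<Longrightarrow> p \<in> below e \<longleftrightarrow> q \<in> below e"
  unfolding below_def by (blast intro: rtrancl_trans dest: adj_rtrancl_sym)

lemma flags_below_non_tree: "e \<notin> S \<Longrightarrow> flags_below e = {}"
  using tree_connected[OF root_flag] by (auto simp: flags_below_def below_def)

lemma tree_edge_end_not_below:
  assumes "y \<in> B" "ed y \<in> S"
  shows "vt y \<notin> below (ed y) \<or> vt (\<alpha> y) \<notin> below (ed y)"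
  using adj_rtrancl_remove_edge[OF assms(1) tree_connected[OF root_flag assms(1)]]
  unfolding below_def by blast

lemma tree_edge_end_below:
  assumes "y \<in> B" "ed y \<in> S"
  shows "vt y \<in> below (ed y) \<or> vt (\<alpha> y) \<in> below (ed y)"
  using tree_edge_bridge[OF assms] unfolding below_def
  by (blast intro: rtrancl_trans dest: adj_rtrancl_sym)

lemma down_flag_in: "down_flag a \<Longrightarrow> a \<in> B"
  and down_flag_tree_edge: "down_flag a \<Longrightarrow> ed a \<in> S"
  and down_flag_below: "down_flag a \<Longrightarrow> vt a \<in> below (ed a)"
  by (simp_all add: down_flag_def)

lemma down_flag_alpha_not_below: "down_flag a \<Longrightarrow> vt (\<alpha> a) \<notin> below (ed a)"
  using tree_edge_end_not_below unfolding down_flag_def by blast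

lemma alpha_down_flag:
  assumes "y \<in> B" "ed y \<in> S" "vt y \<notin> below (ed y)"
  shows "down_flag (\<alpha> y)"
  using tree_edge_end_below[OF assms(1,2)] assms
  by (simp add: down_flag_def alpha_in edge_alpha)

lemma tree_edge_down_flag:
  assumes "y \<in> B" "ed y \<in> S"
  shows "down_flag y \<or> down_flag (\<alpha> y)"
  using tree_edge_end_below[OF assms] assms alpha_in edge_alpha alpha_alpha
  unfolding down_flag_def by auto

lemma tree_edge_down_flag_ex: "e \<in> S \<Longrightarrow> \<exists>a. down_flag a \<and> ed a = e"
  using tree tree_edge_down_flag edge_alpha
  by (simp add: spanning_tree_def map_edges_def subset_iff image_iff) metis

lemma below_subset:
  assumes "y \<in> B" "ed y \<in> S" "ed y \<noteq> e" "vt y \<in> below e"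
  shows "below (ed y) \<subseteq> below e"
proof
  fix w assume w: "w \<in> below (ed y)"
  show "w \<in> below e"
  proof (rule ccontr)
    assume "w \<notin> below e"
    then have "(root, w) \<in> (Adj (S - {e}))\<^sup>*" by (simp add: below_def)
    from adj_rtrancl_remove_edge[OF assms(1) this] show False
    proof (elim disjE)
      assume "(root, w) \<in> (Adj (S - {e} - {ed y}))\<^sup>*"
      then have "(root, w) \<in> (Adj (S - {ed y}))\<^sup>*" by (rule adj_rtrancl_mono) blast
      then show False using w by (simp add: below_def)
    next
      assume "(root, vt y) \<in> (Adj (S - {e} - {ed y}))\<^sup>*"
      then have "(root, vt y) \<in> (Adj (S - {e}))\<^sup>*" by (rule adj_rtrancl_mono) blast
      then show False using assms(4) by (simp add: below_def)
    next
      assume "(root, vt (\<alpha> y)) \<in> (Adj (S - {e} - {ed y}))\<^sup>*"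
      then have "(root, vt (\<alpha> y)) \<in> (Adj (S - {e}))\<^sup>*" by (rule adj_rtrancl_mono) blast
      then have "(root, vt y) \<in> (Adj (S - {e}))\<^sup>*"
        using adj_rtrancl_alpha_step[OF assms(1), of "S - {e}"] assms(2,3) by simp
      then show False using assms(4) by (simp add: below_def)
    qed
  qed
qed

lemma down_flag_vertex_not_below:
  assumes a: "down_flag a" and y: "y \<in> B" "vt y = vt a" "ed y \<in> S" "ed y \<noteq> ed a"
  shows "vt a \<notin> below (ed y)"
proof -
  have a_in: "a \<in> B" "ed a \<in> S" using a by (simp_all add: down_flag_def)
  have "(root, vt (\<alpha> a)) \<in> (Adj (S - {ed a}))\<^sup>*"
    using down_flag_alpha_not_below[OF a] by (simp add: below_def)
  from adj_rtrancl_remove_edge[OF y(1) this] have "(root, vt a) \<in> (Adj (S - {ed y}))\<^sup>*"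
  proof (elim disjE)
    assume "(root, vt (\<alpha> a)) \<in> (Adj (S - {ed a} - {ed y}))\<^sup>*"
    then have "(root, vt (\<alpha> a)) \<in> (Adj (S - {ed y}))\<^sup>*" by (rule adj_rtrancl_mono) blast
    then show ?thesis using adj_rtrancl_alpha_step[OF a_in(1), of "S - {ed y}"] a_in y(4) by simp
  next
    assume "(root, vt y) \<in> (Adj (S - {ed a} - {ed y}))\<^sup>*"
    then have "(root, vt a) \<in> (Adj (S - {ed a}))\<^sup>*" using y(2) by (auto elim: adj_rtrancl_mono)
    then show ?thesis using down_flag_below[OF a] by (simp add: below_def)
  next
    assume "(root, vt (\<alpha> y)) \<in> (Adj (S - {ed a} - {ed y}))\<^sup>*"
    then have "(root, vt (\<alpha> y)) \<in> (Adj (S - {ed a}))\<^sup>*" by (rule adj_rtrancl_mono) blast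
    then have "(root, vt a) \<in> (Adj (S - {ed a}))\<^sup>*"
      using adj_rtrancl_alpha_step[OF y(1), of "S - {ed a}"] y by simp
    then show ?thesis using down_flag_below[OF a] by (simp add: below_def)
  qed
  then show ?thesis by (simp add: below_def)
qed

lemma below_reaches_down_flag:
  assumes a: "down_flag a" and x: "x \<in> B" "vt x \<in> below (ed a)"
  shows "(vt x, vt a) \<in> (Adj (S - {ed a}))\<^sup>*"
  using adj_rtrancl_remove_edge[OF down_flag_in[OF a] tree_connected[OF x(1) root_flag]]
    below_cong x(2) root_not_below down_flag_alpha_not_below[OF a]
  by blast

lemma flags_below_disjoint:
  assumes a1: "down_flag a1" and a2: "down_flag a2" and "ed a1 \<noteq> ed a2"
    and "vt (\<alpha> a2) \<notin> below (ed a1)" "vt (\<alpha> a1) \<notin> below (ed a2)"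
  shows "flags_below (ed a1) \<inter> flags_below (ed a2) = {}"
proof -
  have in1: "a1 \<in> B" "ed a1 \<in> S" and in2: "a2 \<in> B" "ed a2 \<in> S"
    using a1 a2 by (simp_all add: down_flag_def)
  have "vt a1 \<notin> below (ed a2)"
    using below_cong[OF adj_rtrancl_alpha_step[OF in1(1), of "S - {ed a2}" "vt (\<alpha> a1)"]] assms in1
    by simp
  moreover have "vt a2 \<notin> below (ed a1)"
    using below_cong[OF adj_rtrancl_alpha_step[OF in2(1), of "S - {ed a1}" "vt (\<alpha> a2)"]] assms in2
    by simp
  moreover have "False" if "x \<in> B" "vt x \<in> below (ed a1)" "vt x \<in> below (ed a2)" for x
  proof -
    from adj_rtrancl_remove_edge[OF in2(1) below_reaches_down_flag[OF a1 that(1,2)]]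
    show False
    proof (elim disjE)
      assume "(vt x, vt a1) \<in> (Adj (S - {ed a1} - {ed a2}))\<^sup>*"
      then have "(vt x, vt a1) \<in> (Adj (S - {ed a2}))\<^sup>*" by (rule adj_rtrancl_mono) blast
      then show False using below_cong that(3) \<open>vt a1 \<notin> below (ed a2)\<close> by blast
    next
      assume "(vt x, vt a2) \<in> (Adj (S - {ed a1} - {ed a2}))\<^sup>*"
      then have "(vt x, vt a2) \<in> (Adj (S - {ed a1}))\<^sup>*" by (rule adj_rtrancl_mono) blast
      then show False using below_cong that(2) \<open>vt a2 \<notin> below (ed a1)\<close> by blast
    next
      assume "(vt x, vt (\<alpha> a2)) \<in> (Adj (S - {ed a1} - {ed a2}))\<^sup>*"
      then have "(vt x, vt (\<alpha> a2)) \<in> (Adj (S - {ed a2}))\<^sup>*" by (rule adj_rtrancl_mono) blast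
      then show False using below_cong that(3) down_flag_alpha_not_below[OF a2] by blast
    qed
  qed
  ultimately show ?thesis by (auto simp: flags_below_def)
qed

lemma flags_below_laminar:
  assumes a1: "down_flag a1" and a2: "down_flag a2"
  shows "flags_below (ed a1) \<inter> flags_below (ed a2) = {} \<or>
    flags_below (ed a1) \<subseteq> flags_below (ed a2) \<or> flags_below (ed a2) \<subseteq> flags_below (ed a1)"
proof -
  have nested: "flags_below (ed a) \<subseteq> flags_below (ed a')"
    if "down_flag a" "ed a \<noteq> ed a'" "vt (\<alpha> a) \<in> below (ed a')" for a a'
    using below_subset[of "\<alpha> a" "ed a'"] that down_flag_in[OF that(1)] down_flag_tree_edge[OF that(1)]
      alpha_in edge_alpha by (auto simp: flags_below_def)
  show ?thesis
  proof (cases "ed a1 = ed a2")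
    case False
    consider "vt (\<alpha> a1) \<in> below (ed a2)" | "vt (\<alpha> a2) \<in> below (ed a1)"
      | "vt (\<alpha> a2) \<notin> below (ed a1)" "vt (\<alpha> a1) \<notin> below (ed a2)"
      by blast
    then show ?thesis
      using nested[OF a1 False] nested[OF a2 not_sym[OF False]] flags_below_disjoint[OF a1 a2 False]
      by cases blast+
  qed simp
qed

lemma reachable_below_edge_at:
  assumes F: "F \<subseteq> S" and cw: "(c, w) \<in> (Adj F)\<^sup>*"
    and down: "\<And>y. y \<in> B \<Longrightarrow> vt y = c \<Longrightarrow> ed y \<in> F \<Longrightarrow> c \<notin> below (ed y)"
  shows "w = c \<or> (\<exists>y\<in>B. vt y = c \<and> ed y \<in> F \<and> w \<in> below (ed y))"
  using cw
proof (induction rule: rtrancl_induct)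
  case (step w' w)
  obtain z where z: "z \<in> B" "ed z \<in> F" "w' = vt z" "w = vt (\<alpha> z)"
    using step(2) adj_iff by blast
  from step.IH show ?case
  proof
    assume "w' = c"
    then have "w = c \<or> w \<in> below (ed z)"
      using down[OF z(1)] tree_edge_end_below[OF z(1)] z F by blast
    then show ?thesis using z \<open>w' = c\<close> by blast
  next
    assume "\<exists>y\<in>B. vt y = c \<and> ed y \<in> F \<and> w' \<in> below (ed y)"
    then obtain y where y: "y \<in> B" "vt y = c" "ed y \<in> F" "w' \<in> below (ed y)" by blast
    show ?thesis
    proof (cases "ed z = ed y")
      case True
      then have "z = y \<or> z = \<alpha> y" using edge_eq_iff y(1) z(1) by blast
      moreover have "z \<noteq> y" using down y z by blast
      ultimately show ?thesis using z(4) y(2) alpha_alpha[OF y(1)] by auto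
    next
      case False
      then have "(w', w) \<in> Adj (S - {ed y})" using adjI[of z "S - {ed y}"] z F by auto
      then have "w \<in> below (ed y)" using below_cong y(4) by blast
      then show ?thesis using y by blast
    qed
  qed
qed simp

lemma sigma_permutation: "permutation \<sigma>"
  using sigma_permutes finite_flags permutation_permutes by blast

lemma vertex_eq_orbit: "vt x = orbit \<sigma> x"
  by (simp add: vertex_of_def orbit_altdef_permutation[OF sigma_permutation])

lemma in_vertex: "x \<in> vt x"
  by (simp add: vertex_eq_orbit permutation_self_in_orbit[OF sigma_permutation])

lemma vertex_eq_iff: "vt y = vt x \<longleftrightarrow> y \<in> vt x"
  using in_vertex orbit_cyclic_eq3[OF cyclic_on_orbit'[OF sigma_permutation]]
  by (metis vertex_eq_orbit)

lemma vertex_funpow: "vt ((\<sigma> ^^ n) x) = vt x"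
  using funpow_in_orbit[of x \<sigma> x n] in_vertex vertex_eq_iff vertex_eq_orbit by metis

lemma vertex_subset: "x \<in> B \<Longrightarrow> vt x \<subseteq> B"
  by (simp add: vertex_eq_orbit permutes_orbit_subset[OF sigma_permutes])

lemma vertex_conv_funpow: "vt x = (\<lambda>l. (\<sigma> ^^ l) x) ` {..<least_power \<sigma> x}"
  using orbit_altdef_bounded[OF least_power_of_permutation[OF sigma_permutation]]
  by (auto simp: vertex_eq_orbit)

lemma funpow_least_power_pred: "(\<sigma> ^^ (least_power \<sigma> a - 1)) (\<sigma> a) = a"
proof -
  have "(\<sigma> ^^ (least_power \<sigma> a - 1)) (\<sigma> a) = (\<sigma> ^^ Suc (least_power \<sigma> a - 1)) a"
    by (simp only: funpow_Suc_right o_apply)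
  then show ?thesis using least_power_of_permutation[OF sigma_permutation] by simp
qed

lemma vertex_others_conv_funpow:
  "vt a - {a} = (\<lambda>l. (\<sigma> ^^ l) (\<sigma> a)) ` {..<least_power \<sigma> a - 1}"
proof
  define k where "k = least_power \<sigma> a"
  have k_least: "(\<sigma> ^^ l) a \<noteq> a" if "0 < l" "l < k" for l
    using least_power_le[where f=\<sigma> and n=l and x=a] that by (auto simp: k_def)
  show "vt a - {a} \<subseteq> (\<lambda>l. (\<sigma> ^^ l) (\<sigma> a)) ` {..<least_power \<sigma> a - 1}"
  proof
    fix x assume "x \<in> vt a - {a}"
    then obtain l where "l < k" "x = (\<sigma> ^^ l) a" "x \<noteq> a"
      by (auto simp: vertex_conv_funpow k_def)
    then show "x \<in> (\<lambda>l. (\<sigma> ^^ l) (\<sigma> a)) ` {..<least_power \<sigma> a - 1}"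
      by (cases l) (auto simp: funpow_swap1 k_def)
  qed
  show "(\<lambda>l. (\<sigma> ^^ l) (\<sigma> a)) ` {..<least_power \<sigma> a - 1} \<subseteq> vt a - {a}"
  proof
    fix x assume "x \<in> (\<lambda>l. (\<sigma> ^^ l) (\<sigma> a)) ` {..<least_power \<sigma> a - 1}"
    then obtain l where "l < k - 1" "x = (\<sigma> ^^ Suc l) a"
      by (auto simp only: funpow_Suc_right o_apply k_def)
    then show "x \<in> vt a - {a}"
      using k_least[of "Suc l"] vertex_funpow[of "Suc l" a] in_vertex[of x] by auto
  qed
qed

lemma down_flag_other_tree_edge:
  assumes a: "down_flag a" and y: "y \<in> vt a" "y \<noteq> a" "ed y \<in> S"
  shows "down_flag (\<alpha> y)" and "flags_below (ed y) \<subset> flags_below (ed a)"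
proof -
  have a_in: "a \<in> B" "ed a \<in> S" "vt a \<in> below (ed a)" using a by (simp_all add: down_flag_def)
  have y_in: "y \<in> B" "vt y = vt a" using y(1) vertex_subset[OF a_in(1)] vertex_eq_iff by auto
  have "y \<noteq> \<alpha> a" using y_in(2) a_in(3) down_flag_alpha_not_below[OF a] by auto
  then have "ed y \<noteq> ed a" using edge_eq_iff[OF a_in(1) y_in(1)] y(2) by blast
  then have not_below: "vt a \<notin> below (ed y)"
    using down_flag_vertex_not_below[OF a y_in(1,2) y(3)] by blast
  then show "down_flag (\<alpha> y)" using alpha_down_flag[OF y_in(1) y(3)] y_in(2) by simp
  have "(vt y, vt (\<alpha> y)) \<in> (Adj (S - {ed a}))\<^sup>*"
    using y_in(1) y(3) \<open>ed y \<noteq> ed a\<close> by (intro r_into_rtrancl adjI) auto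
  from below_cong[OF this] have "vt (\<alpha> y) \<in> below (ed a)" using y_in(2) a_in(3) by simp
  then have "below (ed y) \<subseteq> below (ed a)"
    using below_subset[of "\<alpha> y" "ed a"] y_in(1) y(3) \<open>ed y \<noteq> ed a\<close> by (simp add: alpha_in edge_alpha)
  then have "flags_below (ed y) \<subseteq> flags_below (ed a)" by (auto simp: flags_below_def)
  moreover have "a \<in> flags_below (ed a)" "a \<notin> flags_below (ed y)"
    using a_in not_below by (simp_all add: flags_below_def)
  ultimately show "flags_below (ed y) \<subset> flags_below (ed a)" by blast
qed

lemma flags_below_decompose:
  assumes a: "down_flag a"
  shows "flags_below (ed a) = vt a \<union> (\<Union>y \<in> vt a - {a}. flags_below (ed y))"
proof
  have a_in: "a \<in> B" "ed a \<in> S" "vt a \<in> below (ed a)" using a by (simp_all add: down_flag_def)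
  show "flags_below (ed a) \<subseteq> vt a \<union> (\<Union>y \<in> vt a - {a}. flags_below (ed y))"
  proof
    fix x assume "x \<in> flags_below (ed a)"
    then have x: "x \<in> B" "vt x \<in> below (ed a)" by (simp_all add: flags_below_def)
    have "(vt a, vt x) \<in> (Adj (S - {ed a}))\<^sup>*"
      using adj_rtrancl_sym[OF below_reaches_down_flag[OF a x]] .
    from reachable_below_edge_at[OF Diff_subset this] down_flag_vertex_not_below[OF a]
    have "vt x = vt a \<or> (\<exists>y\<in>B. vt y = vt a \<and> ed y \<in> S - {ed a} \<and> vt x \<in> below (ed y))"
      by blast
    then show "x \<in> vt a \<union> (\<Union>y \<in> vt a - {a}. flags_below (ed y))"
      using x(1) vertex_eq_iff by (auto simp: flags_below_def)
  qed
  show "vt a \<union> (\<Union>y \<in> vt a - {a}. flags_below (ed y)) \<subseteq> flags_below (ed a)"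
    using vertex_subset[OF a_in(1)] vertex_eq_iff a_in(3) down_flag_other_tree_edge[OF a]
      flags_below_non_tree by (fastforce simp: flags_below_def)
qed

lemma flags_decompose_at_root: "B = root \<union> (\<Union>y \<in> root. flags_below (ed y))"
proof
  show "B \<subseteq> root \<union> (\<Union>y \<in> root. flags_below (ed y))"
  proof
    fix x assume "x \<in> B"
    from reachable_below_edge_at[OF order_refl tree_connected[OF root_flag this]] root_not_below
    have "vt x = root \<or> (\<exists>y\<in>B. vt y = root \<and> ed y \<in> S \<and> vt x \<in> below (ed y))"
      by blast
    then show "x \<in> root \<union> (\<Union>y \<in> root. flags_below (ed y))"
      using \<open>x \<in> B\<close> vertex_eq_iff by (auto simp: flags_below_def)
  qed
qed (use vertex_subset[OF root_flag] in \<open>auto simp: flags_below_def\<close>)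

section \<open>The tour\<close>

abbreviation \<tau> where "\<tau> \<equiv> tour \<sigma> \<alpha> S"

lemma tour_tree_edge: "ed x \<in> S \<Longrightarrow> \<tau> x = \<sigma> (\<alpha> x)"
  and tour_non_tree_edge: "ed x \<notin> S \<Longrightarrow> \<tau> x = \<sigma> x"
  by (simp_all add: tour_def)

definition tree_flip :: "'b \<Rightarrow> 'b" where
  "tree_flip x = (if ed x \<in> S then \<alpha> x else x)"

lemma tree_flip_permutes: "tree_flip permutes B"
proof -
  have "tree_flip (tree_flip x) = x" for x
    using tree_edge_flag_in by (cases "ed x \<in> S") (simp_all add: tree_flip_def edge_alpha alpha_alpha)
  moreover have "tree_flip x = x" if "x \<notin> B" for x
    using that tree_edge_flag_in by (auto simp: tree_flip_def)
  ultimately show ?thesis unfolding permutes_def by metis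
qed

lemma tour_permutes: "\<tau> permutes B"
proof -
  have "\<tau> = \<sigma> \<circ> tree_flip" by (auto simp: tour_def tree_flip_def)
  then show ?thesis using permutes_compose[OF tree_flip_permutes sigma_permutes] by simp
qed

lemma funpow_tour_in: "x \<in> B \<Longrightarrow> (\<tau> ^^ n) x \<in> B"
  by (induction n) (auto simp: permutes_in_image[OF tour_permutes])

text \<open>Crossing the edge of a downwards (\<tau> (\<alpha> a) = \<sigma> a), the tour visits exactly the flags below
  that edge and then arrives at a.\<close>
definition tour_excursion :: "'b \<Rightarrow> nat \<Rightarrow> bool" where
  "tour_excursion a n \<longleftrightarrow>
     (\<tau> ^^ n) (\<sigma> a) = a \<and> (\<lambda>j. (\<tau> ^^ j) (\<sigma> a)) ` {..n} = flags_below (ed a)"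

lemma tour_excursion_step:
  assumes "(\<tau> ^^ m) z = y" "y \<in> B" "ed y \<in> S" "tour_excursion (\<alpha> y) n"
  shows "(\<tau> ^^ (m + Suc (Suc n))) z = \<sigma> y"
    and "(\<lambda>j. (\<tau> ^^ j) z) ` {..m + Suc (Suc n)} =
      (\<lambda>j. (\<tau> ^^ j) z) ` {..m} \<union> flags_below (ed y) \<union> {\<sigma> y}"
proof -
  have n: "(\<tau> ^^ n) (\<sigma> (\<alpha> y)) = \<alpha> y" "(\<lambda>j. (\<tau> ^^ j) (\<sigma> (\<alpha> y))) ` {..n} = flags_below (ed y)"
    using assms(4) edge_alpha[OF assms(2)] by (simp_all add: tour_excursion_def)
  have step_in: "\<tau> y = \<sigma> (\<alpha> y)" using assms(3) by (rule tour_tree_edge)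
  have step_out: "\<tau> (\<alpha> y) = \<sigma> y"
    using assms(2,3) by (simp add: tour_tree_edge edge_alpha alpha_alpha)
  have "(\<tau> ^^ (m + Suc (Suc n))) z = (\<tau> ^^ Suc (Suc n)) ((\<tau> ^^ m) z)"
    by (simp only: add.commute[of m] funpow_add o_apply)
  also have "\<dots> = \<tau> ((\<tau> ^^ n) (\<tau> y))" using assms(1) by (simp add: funpow_swap1)
  also have "\<dots> = \<sigma> y" using n(1) step_in step_out by simp
  finally show "(\<tau> ^^ (m + Suc (Suc n))) z = \<sigma> y" .
  have "(\<lambda>j. (\<tau> ^^ j) y) ` {..Suc (Suc n)} = insert y ((\<lambda>j. (\<tau> ^^ j) (\<sigma> (\<alpha> y))) ` {..Suc n})"
    unfolding funpow_image_atMost_Suc step_in ..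
  also have "(\<lambda>j. (\<tau> ^^ j) (\<sigma> (\<alpha> y))) ` {..Suc n} = insert (\<sigma> y) (flags_below (ed y))"
    using n step_out by (simp add: atMost_Suc)
  finally show "(\<lambda>j. (\<tau> ^^ j) z) ` {..m + Suc (Suc n)} =
      (\<lambda>j. (\<tau> ^^ j) z) ` {..m} \<union> flags_below (ed y) \<union> {\<sigma> y}"
    unfolding funpow_image_atMost_add assms(1) using assms(1) by force
qed

text \<open>The tour runs through the flags of a vertex in \<sigma>-order, interrupted after each flag y on a
  tree edge leading down by the excursion of \<alpha> y.\<close>
lemma tour_walk_around_vertex:
  assumes "z \<in> B"
    and "\<And>l. l < i \<Longrightarrow> ed ((\<sigma> ^^ l) z) \<in> S \<Longrightarrow> \<exists>n. tour_excursion (\<alpha> ((\<sigma> ^^ l) z)) n"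
  shows "\<exists>m. (\<tau> ^^ m) z = (\<sigma> ^^ i) z \<and>
    (\<lambda>j. (\<tau> ^^ j) z) ` {..m} = (\<lambda>l. (\<sigma> ^^ l) z) ` {..i} \<union> (\<Union>l<i. flags_below (ed ((\<sigma> ^^ l) z)))"
  using assms(2)
proof (induction i)
  case (Suc i)
  define y where "y = (\<sigma> ^^ i) z"
  obtain m where m: "(\<tau> ^^ m) z = y"
    "(\<lambda>j. (\<tau> ^^ j) z) ` {..m} = (\<lambda>l. (\<sigma> ^^ l) z) ` {..i} \<union> (\<Union>l<i. flags_below (ed ((\<sigma> ^^ l) z)))"
    using Suc by (metis less_SucI y_def)
  have "y \<in> B" using funpow_sigma_in[OF assms(1)] by (simp add: y_def)
  have target: "(\<lambda>l. (\<sigma> ^^ l) z) ` {..Suc i} \<union> (\<Union>l<Suc i. flags_below (ed ((\<sigma> ^^ l) z))) =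
      (\<lambda>j. (\<tau> ^^ j) z) ` {..m} \<union> flags_below (ed y) \<union> {\<sigma> y}"
    unfolding m(2) by (auto simp: atMost_Suc lessThan_Suc y_def)
  have sigma_y: "\<sigma> y = (\<sigma> ^^ Suc i) z" by (simp add: y_def)
  show ?case
  proof (cases "ed y \<in> S")
    case False
    then have "(\<tau> ^^ Suc m) z = \<sigma> y" using m(1) by (simp add: tour_non_tree_edge)
    moreover have "(\<lambda>j. (\<tau> ^^ j) z) ` {..Suc m} = (\<lambda>j. (\<tau> ^^ j) z) ` {..m} \<union> {\<sigma> y}"
      using calculation by (auto simp: atMost_Suc)
    ultimately show ?thesis
      unfolding target flags_below_non_tree[OF False] sigma_y by blast
  next
    case True
    then obtain n where "tour_excursion (\<alpha> y) n" using Suc.prems[of i] by (auto simp: y_def)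
    from tour_excursion_step[OF m(1) \<open>y \<in> B\<close> True this] show ?thesis
      unfolding target sigma_y by blast
  qed
qed (intro exI[of _ 0], simp)

lemma finite_flags_below: "finite (flags_below e)"
  using finite_flags by (simp add: flags_below_def)

lemma down_flag_tour_excursion: "down_flag a \<Longrightarrow> \<exists>n. tour_excursion a n"
proof (induction "card (flags_below (ed a))" arbitrary: a rule: less_induct)
  case less
  have "a \<in> B" using down_flag_in[OF less.prems] .
  define k where "k = least_power \<sigma> a"
  have others: "vt a - {a} = (\<lambda>l. (\<sigma> ^^ l) (\<sigma> a)) ` {..<k - 1}"
    and last: "(\<sigma> ^^ (k - 1)) (\<sigma> a) = a"
    using vertex_others_conv_funpow funpow_least_power_pred by (simp_all add: k_def)
  have excursions: "\<exists>n. tour_excursion (\<alpha> ((\<sigma> ^^ l) (\<sigma> a))) n"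
    if "l < k - 1" "ed ((\<sigma> ^^ l) (\<sigma> a)) \<in> S" for l
  proof -
    define y where "y = (\<sigma> ^^ l) (\<sigma> a)"
    have "y \<in> vt a - {a}" using others that(1) by (auto simp: y_def)
    note sub = down_flag_other_tree_edge[OF less.prems _ _ that(2)[folded y_def]]
    have "card (flags_below (ed (\<alpha> y))) < card (flags_below (ed a))"
      using psubset_card_mono[OF finite_flags_below sub(2)] \<open>y \<in> vt a - {a}\<close>
        edge_alpha vertex_subset[OF \<open>a \<in> B\<close>] by auto
    then show ?thesis using less.hyps sub(1) \<open>y \<in> vt a - {a}\<close> by (simp add: y_def)
  qed
  obtain m where "(\<tau> ^^ m) (\<sigma> a) = a"
    "(\<lambda>j. (\<tau> ^^ j) (\<sigma> a)) ` {..m} =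
       (\<lambda>l. (\<sigma> ^^ l) (\<sigma> a)) ` {..k - 1} \<union> (\<Union>l<k - 1. flags_below (ed ((\<sigma> ^^ l) (\<sigma> a))))"
    using tour_walk_around_vertex[where z="\<sigma> a" and i="k - 1", OF sigma_in[OF \<open>a \<in> B\<close>] excursions]
      last by auto
  moreover have "(\<lambda>l. (\<sigma> ^^ l) (\<sigma> a)) ` {..k - 1} = insert a (vt a - {a})"
    unfolding lessThan_Suc_atMost[symmetric] lessThan_Suc image_insert others last ..
  then have "(\<lambda>l. (\<sigma> ^^ l) (\<sigma> a)) ` {..k - 1} = vt a" using in_vertex[of a] by auto
  ultimately show ?case
    using flags_below_decompose[OF less.prems] others by (auto simp: tour_excursion_def)
qed

lemma root_tour: "\<exists>m. (\<lambda>j. (\<tau> ^^ j) r) ` {..m} = B"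
proof -
  define k where "k = least_power \<sigma> r"
  have "(\<sigma> ^^ k) r = r"
    using least_power_of_permutation[OF sigma_permutation] by (simp add: k_def)
  have excursions: "\<exists>n. tour_excursion (\<alpha> ((\<sigma> ^^ l) r)) n" if "ed ((\<sigma> ^^ l) r) \<in> S" for l
    using down_flag_tour_excursion[OF alpha_down_flag[OF funpow_sigma_in[OF root_flag] that]]
      vertex_funpow root_not_below by simp
  obtain m where "(\<lambda>j. (\<tau> ^^ j) r) ` {..m} =
      (\<lambda>l. (\<sigma> ^^ l) r) ` {..k} \<union> (\<Union>l<k. flags_below (ed ((\<sigma> ^^ l) r)))"
    using tour_walk_around_vertex[where z=r and i=k, OF root_flag excursions] by blast
  moreover have "(\<lambda>l. (\<sigma> ^^ l) r) ` {..k} = root"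
    using \<open>(\<sigma> ^^ k) r = r\<close> in_vertex[of r]
    unfolding lessThan_Suc_atMost[symmetric] lessThan_Suc image_insert
    by (simp add: vertex_conv_funpow k_def insert_absorb)
  moreover have "(\<Union>l<k. flags_below (ed ((\<sigma> ^^ l) r))) = (\<Union>y \<in> root. flags_below (ed y))"
    by (simp add: vertex_conv_funpow k_def)
  ultimately show ?thesis using flags_decompose_at_root by auto
qed

lemma card_eq_tour_period: "card B = least_power \<tau> r"
proof -
  have "permutation \<tau>" using tour_permutes finite_flags permutation_permutes by blast
  define p where "p = least_power \<tau> r"
  have inj: "inj_on (\<lambda>j. (\<tau> ^^ j) r) {..<p}"
    using cycle_of_permutation[OF \<open>permutation \<tau>\<close>, of r]
    by (simp add: p_def distinct_map atLeast_upt)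
  have "(\<lambda>j. (\<tau> ^^ j) r) ` {..<p} = B"
  proof
    show "(\<lambda>j. (\<tau> ^^ j) r) ` {..<p} \<subseteq> B" using funpow_tour_in[OF root_flag] by blast
    have "(\<tau> ^^ j) r \<in> (\<lambda>j. (\<tau> ^^ j) r) ` {..<p}" for j
      using funpow_mod_eq[where f=\<tau> and n=p and x=r and m=j] least_power_of_permutation[OF \<open>permutation \<tau>\<close>, of r]
      by (intro image_eqI[of _ _ "j mod p"]) (auto simp: p_def)
    then show "B \<subseteq> (\<lambda>j. (\<tau> ^^ j) r) ` {..<p}" using root_tour by blast
  qed
  then show ?thesis using card_image[OF inj] by (simp add: p_def)
qed

lemma funpow_tour_card: "(\<tau> ^^ card B) r = r"
  using least_power_of_permutation(1) tour_permutes finite_flags permutation_permutes card_eq_tour_period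
  by metis

lemma tour_positions_bij: "bij_betw (\<lambda>j. (\<tau> ^^ j) r) {..<card B} B"
proof -
  have "permutation \<tau>" using tour_permutes finite_flags permutation_permutes by blast
  then have "inj_on (\<lambda>j. (\<tau> ^^ j) r) {..<card B}"
    using cycle_of_permutation[of \<tau> r] by (simp add: card_eq_tour_period distinct_map atLeast_upt)
  moreover have "(\<lambda>j. (\<tau> ^^ j) r) ` {..<card B} = B"
    using card_image[OF calculation] funpow_tour_in[OF root_flag] finite_flags
    by (simp add: card_subset_eq image_subset_iff)
  ultimately show ?thesis by (simp add: bij_betw_def)
qed

definition tour_pos :: "'b \<Rightarrow> nat" where
  "tour_pos = the_inv_into {..<card B} (\<lambda>j. (\<tau> ^^ j) r)"

lemma tour_pos_less: "x \<in> B \<Longrightarrow> tour_pos x < card B"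
  using bij_betw_apply[OF bij_betw_the_inv_into[OF tour_positions_bij]] by (simp add: tour_pos_def)

lemma funpow_tour_pos: "x \<in> B \<Longrightarrow> (\<tau> ^^ tour_pos x) r = x"
  using f_the_inv_into_f_bij_betw[OF tour_positions_bij] by (simp add: tour_pos_def)

lemma tour_pos_funpow: "j < card B \<Longrightarrow> tour_pos ((\<tau> ^^ j) r) = j"
  using the_inv_into_f_f[OF bij_betw_imp_inj_on[OF tour_positions_bij]] by (simp add: tour_pos_def)

lemma tour_pos_eq_iff: "x \<in> B \<Longrightarrow> y \<in> B \<Longrightarrow> tour_pos x = tour_pos y \<longleftrightarrow> x = y"
  by (metis funpow_tour_pos)

lemma tour_pos_excursion:
  assumes a: "down_flag a" and n: "tour_excursion a n" and "j \<le> n"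
  shows "tour_pos ((\<tau> ^^ j) (\<sigma> a)) = j + Suc (tour_pos (\<alpha> a))"
proof -
  have a_in: "a \<in> B" "\<alpha> a \<in> B" "ed a \<in> S"
    using a alpha_in by (simp_all add: down_flag_def)
  define p where "p = tour_pos (\<alpha> a)"
  have "\<tau> ((\<tau> ^^ p) r) = \<sigma> a"
    using funpow_tour_pos[OF a_in(2)] a_in by (simp add: p_def tour_tree_edge edge_alpha alpha_alpha)
  then have shift: "(\<tau> ^^ (i + Suc p)) r = (\<tau> ^^ i) (\<sigma> a)" for i
    by (simp add: funpow_add funpow_swap1)
  have "n + Suc p < card B"
  proof (rule ccontr)
    assume "\<not> n + Suc p < card B"
    then have "(\<tau> ^^ (card B - Suc p)) (\<sigma> a) = r" "card B - Suc p \<le> n"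
      using shift[of "card B - Suc p"] funpow_tour_card tour_pos_less[OF a_in(2)] by (simp_all add: p_def)
    then have "r \<in> (\<lambda>j. (\<tau> ^^ j) (\<sigma> a)) ` {..n}" by force
    then have "r \<in> flags_below (ed a)" using n by (simp add: tour_excursion_def)
    then show False using root_not_below by (simp add: flags_below_def)
  qed
  then show ?thesis
    using tour_pos_funpow[of "j + Suc p"] shift[of j] \<open>j \<le> n\<close> by (simp add: p_def)
qed

lemma down_flag_tour_interval:
  assumes a: "down_flag a"
  shows "tour_pos (\<alpha> a) < tour_pos a"
    and "x \<in> B \<Longrightarrow> x \<in> flags_below (ed a) \<longleftrightarrow> tour_pos (\<alpha> a) < tour_pos x \<and> tour_pos x \<le> tour_pos a"
proof -
  obtain n where n: "tour_excursion a n" using down_flag_tour_excursion[OF a] ..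
  note pos = tour_pos_excursion[OF a n]
  have pos_a: "tour_pos a = n + Suc (tour_pos (\<alpha> a))"
    using pos[of n] n by (simp add: tour_excursion_def)
  then show "tour_pos (\<alpha> a) < tour_pos a" by simp
  assume "x \<in> B"
  show "x \<in> flags_below (ed a) \<longleftrightarrow> tour_pos (\<alpha> a) < tour_pos x \<and> tour_pos x \<le> tour_pos a"
  proof
    assume "x \<in> flags_below (ed a)"
    then obtain j where "j \<le> n" "x = (\<tau> ^^ j) (\<sigma> a)" using n by (auto simp: tour_excursion_def)
    then show "tour_pos (\<alpha> a) < tour_pos x \<and> tour_pos x \<le> tour_pos a" using pos pos_a by simp
  next
    assume between: "tour_pos (\<alpha> a) < tour_pos x \<and> tour_pos x \<le> tour_pos a"
    define j where "j = tour_pos x - Suc (tour_pos (\<alpha> a))"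
    have "j \<le> n" using between pos_a unfolding j_def by linarith
    then have "tour_pos ((\<tau> ^^ j) (\<sigma> a)) = tour_pos x" using pos between by (simp add: j_def)
    then have "x = (\<tau> ^^ j) (\<sigma> a)"
      using tour_pos_eq_iff[OF \<open>x \<in> B\<close>] funpow_tour_in sigma_in down_flag_in[OF a] by metis
    then show "x \<in> flags_below (ed a)" using n \<open>j \<le> n\<close> by (auto simp: tour_excursion_def)
  qed
qed

section \<open>Ancestors\<close>

abbreviation ancestor_of where "ancestor_of \<equiv> ancestor B \<sigma> \<alpha> S root"

lemma adj_into_below:
  assumes a: "down_flag a" and "(p, q) \<in> Adj S" "p \<notin> below (ed a)" "q \<in> below (ed a)"
  shows "p = vt (\<alpha> a) \<and> q = vt a"
proof -
  have a_in: "a \<in> B" "vt a \<in> below (ed a)" using a by (simp_all add: down_flag_def)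
  obtain z where z: "z \<in> B" "ed z \<in> S" "p = vt z" "q = vt (\<alpha> z)"
    using assms(2) adj_iff by blast
  have "ed z = ed a"
  proof (rule ccontr)
    assume "ed z \<noteq> ed a"
    then have "(p, q) \<in> Adj (S - {ed a})" using adjI[of z "S - {ed a}"] z by auto
    then show False using below_cong assms(3,4) by blast
  qed
  then have "z = \<alpha> a" using edge_eq_iff[OF a_in(1) z(1)] assms(3) a_in(2) z(3) by blast
  then show ?thesis using z(3,4) alpha_alpha[OF a_in(1)] by simp
qed

lemma walk_enters_below:
  assumes a: "down_flag a" and steps: "\<And>k. i \<le> k \<Longrightarrow> k < j \<Longrightarrow> (f k, f (Suc k)) \<in> Adj S"
    and "f i \<notin> below (ed a)" "f j \<in> below (ed a)" "i \<le> j"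
  shows "\<exists>k. i \<le> k \<and> k < j \<and> f k = vt (\<alpha> a) \<and> f (Suc k) = vt a"
  using nat_crossing[of "\<lambda>k. f k \<in> below (ed a)", OF assms(3-5)] adj_into_below[OF a] steps by blast

lemma walk_leaves_below:
  assumes a: "down_flag a" and steps: "\<And>k. i \<le> k \<Longrightarrow> k < j \<Longrightarrow> (f k, f (Suc k)) \<in> Adj S"
    and "f i \<in> below (ed a)" "f j \<notin> below (ed a)" "i \<le> j"
  shows "\<exists>k. i \<le> k \<and> k < j \<and> f k = vt a \<and> f (Suc k) = vt (\<alpha> a)"
  using nat_crossing[of "\<lambda>k. f k \<notin> below (ed a)", OF _ assms(4,5)] assms(3)
    adj_into_below[OF a adj_sym] steps by blast

lemma ancestor_below:
  assumes "ancestor_of u v" "down_flag a" "u \<in> below (ed a)"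
  shows "v \<in> below (ed a)"
proof (rule ccontr)
  assume "v \<notin> below (ed a)"
  obtain ps where ps: "is_path (Adj S) root v ps" "u \<in> set ps"
    using assms(1) by (auto simp: ancestor_def)
  then have path: "ps ! 0 = root" "ps ! (length ps - 1) = v" "distinct ps"
    "\<And>k. Suc k < length ps \<Longrightarrow> (ps ! k, ps ! Suc k) \<in> Adj S"
    by (auto simp: is_path_def hd_conv_nth last_conv_nth)
  obtain i where i: "i < length ps" "ps ! i = u" using ps(2) by (metis in_set_conv_nth)
  obtain k1 where k1: "k1 < i" "ps ! k1 = vt (\<alpha> a)" "ps ! Suc k1 = vt a"
    using walk_enters_below[of a 0 i "(!) ps"] assms(2,3) path i root_not_below by auto
  have "i \<le> length ps - 1" using i(1) by simp
  then obtain k2 where k2: "i \<le> k2" "k2 < length ps - 1" "ps ! k2 = vt a" "ps ! Suc k2 = vt (\<alpha> a)"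
    using walk_leaves_below[of a i "length ps - 1" "(!) ps"] assms(2,3) path(2,4) i \<open>v \<notin> below (ed a)\<close>
    by auto
  have lengths: "Suc k1 < length ps" "k2 < length ps" "k1 < length ps" "Suc k2 < length ps"
    using k1(1) k2(1,2) i(1) by auto
  have "Suc k1 = k2" using nth_eq_iff_index_eq[OF path(3) lengths(1,2)] k1(3) k2(3) by simp
  moreover have "k1 = Suc k2" using nth_eq_iff_index_eq[OF path(3) lengths(3,4)] k1(2) k2(4) by simp
  ultimately show False by simp
qed

lemma non_root_vertex_down_flag:
  assumes "x \<in> B" "vt x \<noteq> root"
  obtains a where "down_flag a" "vt a = vt x"
proof -
  obtain qs where "is_path (Adj S) root (vt x) qs"
    using rtrancl_imp_is_path[OF tree_connected[OF root_flag assms(1)]] .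
  then have path: "qs \<noteq> []" "qs ! 0 = root" "qs ! (length qs - 1) = vt x" "distinct qs"
    "\<And>k. Suc k < length qs \<Longrightarrow> (qs ! k, qs ! Suc k) \<in> Adj S"
    by (auto simp: is_path_def hd_conv_nth last_conv_nth)
  define k where "k = length qs - 2"
  have "length qs - 1 \<noteq> 0" using path(2,3) assms(2) by auto
  then have k: "Suc k < length qs" "qs ! Suc k = vt x"
    using path(3) by (simp_all add: k_def numeral_2_eq_2 Suc_diff_Suc)
  obtain z where z: "z \<in> B" "ed z \<in> S" "qs ! k = vt z" "vt x = vt (\<alpha> z)"
    using path(5)[OF k(1)] k(2) adj_iff by auto
  have "(qs ! i, qs ! Suc i) \<in> Adj (S - {ed z})" if i: "i < k" for i
  proof -
    obtain z' where z': "z' \<in> B" "ed z' \<in> S" "qs ! i = vt z'" "qs ! Suc i = vt (\<alpha> z')"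
      using path(5)[of i] i k(1) adj_iff by auto
    have "i < length qs" "Suc i < length qs" using i k(1) by simp_all
    then have "qs ! i \<noteq> vt x" "qs ! Suc i \<noteq> vt x"
      using nth_eq_iff_index_eq[OF path(4) _ k(1)] i k(2) by auto
    then have "z' \<noteq> z" "z' \<noteq> \<alpha> z" using z z' alpha_alpha by auto
    then have "ed z' \<noteq> ed z" using edge_eq_iff[OF z(1) z'(1)] by blast
    then show ?thesis using adjI[of z' "S - {ed z}"] z' by simp
  qed
  then have "(root, vt z) \<in> (Adj (S - {ed z}))\<^sup>*"
    using rtrancl_chain[of k "(!) qs"] path(2) z(3) by simp
  then have "down_flag (\<alpha> z)" using alpha_down_flag[OF z(1,2)] by (simp add: below_def)
  then show thesis using that z(4) by simp
qed

lemma below_imp_ancestor: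
  assumes "x \<in> B" "y \<in> B"
    and below: "\<And>a. down_flag a \<Longrightarrow> vt x \<in> below (ed a) \<Longrightarrow> vt y \<in> below (ed a)"
  shows "ancestor_of (vt x) (vt y)"
proof -
  obtain ps where ps: "is_path (Adj S) root (vt y) ps"
    using rtrancl_imp_is_path[OF tree_connected[OF root_flag assms(2)]] .
  then have path: "ps \<noteq> []" "ps ! 0 = root" "ps ! (length ps - 1) = vt y"
    "\<And>k. Suc k < length ps \<Longrightarrow> (ps ! k, ps ! Suc k) \<in> Adj S"
    by (auto simp: is_path_def hd_conv_nth last_conv_nth)
  have "vt x \<in> set ps"
  proof (cases "vt x = root")
    case True
    then show ?thesis using path(1,2) nth_mem by fastforce
  next
    case False
    then obtain a where a: "down_flag a" "vt a = vt x" using non_root_vertex_down_flag assms(1) by blast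
    then have "vt y \<in> below (ed a)" using below down_flag_below by metis
    then obtain k where "k < length ps - 1" "ps ! Suc k = vt a"
      using walk_enters_below[of a 0 "length ps - 1" "(!) ps"] a(1) path root_not_below by auto
    then show ?thesis using a(2) nth_mem[of "Suc k" ps] by auto
  qed
  then show ?thesis using ps by (auto simp: ancestor_def)
qed

lemma ancestor_iff_below:
  assumes "x \<in> B" "y \<in> B"
  shows "ancestor_of (vt x) (vt y) \<longleftrightarrow>
    (\<forall>a. down_flag a \<longrightarrow> vt x \<in> below (ed a) \<longrightarrow> vt y \<in> below (ed a))"
  using ancestor_below below_imp_ancestor[OF assms] by blast

section \<open>The double occurrence word\<close>

abbreviation word where "word \<equiv> dow B \<sigma> \<alpha> r S"

lemma length_word: "length word = card B"
  by (simp add: dow_def)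

lemma word_nth: "i < card B \<Longrightarrow> word ! i = ed ((\<tau> ^^ i) r)"
  by (simp add: dow_def)

lemma word_nth_tour_pos: "x \<in> B \<Longrightarrow> word ! tour_pos x = ed x"
  by (simp add: word_nth tour_pos_less funpow_tour_pos)

lemma word_nth_eq_edge_iff:
  assumes "x \<in> B" "i < card B"
  shows "word ! i = ed x \<longleftrightarrow> i = tour_pos x \<or> i = tour_pos (\<alpha> x)"
proof -
  have "word ! i = ed x \<longleftrightarrow> (\<tau> ^^ i) r = x \<or> (\<tau> ^^ i) r = \<alpha> x"
    using word_nth[OF assms(2)] edge_eq_iff[OF assms(1) funpow_tour_in[OF root_flag]] by auto
  also have "\<dots> \<longleftrightarrow> i = tour_pos x \<or> i = tour_pos (\<alpha> x)"
    using tour_pos_funpow[OF assms(2)] funpow_tour_pos assms(1) alpha_in by auto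
  finally show ?thesis .
qed

lemma Lambda_arc_tour_pos:
  assumes "Lambda_arc word e f"
  obtains x y where "x \<in> B" "y \<in> B" "e = ed x" "f = ed y" "tour_pos x < tour_pos y"
    "tour_pos y < tour_pos (\<alpha> x)" "tour_pos (\<alpha> x) < tour_pos (\<alpha> y)"
proof -
  obtain i1 i2 i3 i4 where i: "i1 < i2" "i2 < i3" "i3 < i4" "i4 < card B"
    "word ! i1 = e" "word ! i2 = f" "word ! i3 = e" "word ! i4 = f"
    using assms unfolding Lambda_arc_def subseq_iff_nth_indices
    by (fastforce simp: map_eq_Cons_conv length_word)
  define x y where "x = (\<tau> ^^ i1) r" and "y = (\<tau> ^^ i2) r"
  have xy: "x \<in> B" "y \<in> B" "tour_pos x = i1" "tour_pos y = i2"
    using funpow_tour_in[OF root_flag] tour_pos_funpow i by (auto simp: x_def y_def)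
  have "e = ed x" "f = ed y" using word_nth i by (auto simp: x_def y_def)
  moreover have "i3 = tour_pos (\<alpha> x)" "i4 = tour_pos (\<alpha> y)"
    using word_nth_eq_edge_iff[OF xy(1), of i3] word_nth_eq_edge_iff[OF xy(2), of i4] i xy calculation
    by auto
  ultimately show thesis using that xy i by simp
qed

lemma down_flag_first_occurrence:
  assumes "down_flag a" "x \<in> B" "ed x = ed a" "tour_pos x < tour_pos (\<alpha> x)"
  shows "x = \<alpha> a"
  using edge_eq_iff[OF down_flag_in[OF assms(1)] assms(2)] down_flag_tour_interval(1)[OF assms(1)] assms(3,4)
  by auto

lemma word_pattern:
  assumes "x \<in> B" "y \<in> B" "z \<in> B"
    and "tour_pos x < tour_pos y" "tour_pos y < tour_pos (\<alpha> x)" "tour_pos (\<alpha> x) < tour_pos z"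
      "tour_pos z < tour_pos (\<alpha> y)" "tour_pos (\<alpha> y) < tour_pos (\<alpha> z)"
  shows "subseq [ed x, ed y, ed x, ed z, ed y, ed z] word"
  unfolding subseq_iff_nth_indices
proof (intro exI conjI)
  let ?ks = "[tour_pos x, tour_pos y, tour_pos (\<alpha> x), tour_pos z, tour_pos (\<alpha> y), tour_pos (\<alpha> z)]"
  show "sorted_wrt (<) ?ks" using assms(4-8) by auto
  show "\<forall>i\<in>set ?ks. i < length word"
    using assms(1-3) alpha_in tour_pos_less by (auto simp: length_word)
  show "map ((!) word) ?ks = [ed x, ed y, ed x, ed z, ed y, ed z]"
    using assms(1-3) alpha_in word_nth_tour_pos edge_alpha by simp
qed

definition links_subtrees :: "'b \<Rightarrow> 'b \<Rightarrow> 'b \<Rightarrow> bool" where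
  "links_subtrees a1 a2 b \<longleftrightarrow> down_flag a1 \<and> down_flag a2 \<and>
     b \<in> flags_below (ed a1) - flags_below (ed a2) \<and> \<alpha> b \<in> flags_below (ed a2) - flags_below (ed a1)"

lemma tremaux_iff_no_links:
  "tremaux B \<sigma> \<alpha> r S \<longleftrightarrow> \<not> (\<exists>a1 a2 b. b \<in> B \<and> links_subtrees a1 a2 b)"
proof -
  have separated: "\<not> ancestor_of (vt x) (vt y) \<longleftrightarrow>
      (\<exists>a. down_flag a \<and> x \<in> flags_below (ed a) \<and> y \<notin> flags_below (ed a))"
    if "x \<in> B" "y \<in> B" for x y
    using ancestor_iff_below[OF that] that by (auto simp: flags_below_def)
  have "\<not> tremaux B \<sigma> \<alpha> r S \<longleftrightarrow>
      (\<exists>b\<in>B. \<not> ancestor_of (vt b) (vt (\<alpha> b)) \<and> \<not> ancestor_of (vt (\<alpha> b)) (vt b))"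
    by (auto simp: tremaux_def)
  also have "\<dots> \<longleftrightarrow> (\<exists>b\<in>B. (\<exists>a1. down_flag a1 \<and> b \<in> flags_below (ed a1) \<and> \<alpha> b \<notin> flags_below (ed a1)) \<and>
      (\<exists>a2. down_flag a2 \<and> \<alpha> b \<in> flags_below (ed a2) \<and> b \<notin> flags_below (ed a2)))"
    by (rule bex_cong[OF refl]) (simp add: separated alpha_in)
  also have "\<dots> \<longleftrightarrow> (\<exists>a1 a2 b. b \<in> B \<and> links_subtrees a1 a2 b)"
    unfolding links_subtrees_def by blast
  finally show ?thesis by blast
qed

lemma links_subtrees_alpha: "b \<in> B \<Longrightarrow> links_subtrees a1 a2 b \<Longrightarrow> links_subtrees a2 a1 (\<alpha> b)"
  by (auto simp: links_subtrees_def alpha_alpha)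

lemma links_subtrees_word_pattern:
  assumes b: "b \<in> B" and links: "links_subtrees a1 a2 b" and first: "tour_pos b < tour_pos (\<alpha> b)"
  shows "subseq [ed a1, ed b, ed a1, ed a2, ed b, ed a2] word"
proof -
  have a1: "down_flag a1" and a2: "down_flag a2"
    and b_in: "b \<in> flags_below (ed a1)" "b \<notin> flags_below (ed a2)"
    and alpha_b_in: "\<alpha> b \<in> flags_below (ed a2)" "\<alpha> b \<notin> flags_below (ed a1)"
    using links by (simp_all add: links_subtrees_def)
  have flags: "a1 \<in> B" "\<alpha> a1 \<in> B" "a2 \<in> B" "\<alpha> a2 \<in> B" "\<alpha> b \<in> B"
    using a1 a2 b alpha_in down_flag_in by auto
  have "a1 \<in> flags_below (ed a1)" using a1 by (simp add: down_flag_def flags_below_def)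
  then have "a1 \<notin> flags_below (ed a2)"
    using flags_below_laminar[OF a1 a2] b_in alpha_b_in by blast
  note I1 = down_flag_tour_interval[OF a1] and I2 = down_flag_tour_interval[OF a2]
  have "tour_pos (\<alpha> a1) < tour_pos b" "tour_pos b \<le> tour_pos a1" "tour_pos a1 < tour_pos (\<alpha> b)"
    using I1(2)[OF b] I1(2)[OF flags(5)] b_in alpha_b_in first by auto
  moreover have "tour_pos (\<alpha> a2) < tour_pos (\<alpha> b)" "tour_pos (\<alpha> b) \<le> tour_pos a2"
    "tour_pos b \<le> tour_pos (\<alpha> a2)" "tour_pos a1 \<le> tour_pos (\<alpha> a2)"
    using I2(2)[OF b] I2(2)[OF flags(5)] I2(2)[OF flags(1)] b_in alpha_b_in first calculation
      \<open>a1 \<notin> flags_below (ed a2)\<close> by auto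
  moreover have "tour_pos b \<noteq> tour_pos a1"
    using tour_pos_eq_iff[OF b flags(1)] calculation by auto
  moreover have "tour_pos a1 \<noteq> tour_pos (\<alpha> a2)"
    using tour_pos_eq_iff[OF flags(1,4)] edge_alpha[OF flags(3)] b_in by auto
  moreover have "tour_pos (\<alpha> b) \<noteq> tour_pos a2"
    using tour_pos_eq_iff[OF flags(5,3)] alpha_alpha[OF b] calculation by force
  ultimately show ?thesis
    using word_pattern[OF flags(2) b flags(4)] alpha_alpha flags edge_alpha by simp
qed

lemma links_subtrees_imp_pattern:
  assumes "b \<in> B" "links_subtrees a1 a2 b"
  shows "\<exists>f e1 e2. e1 \<in> S \<and> e2 \<in> S \<and> subseq [e1, f, e1, e2, f, e2] word"
proof -
  have S: "ed a1 \<in> S" "ed a2 \<in> S"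
    using assms(2) by (simp_all add: links_subtrees_def down_flag_def)
  have "tour_pos b \<noteq> tour_pos (\<alpha> b)"
    using tour_pos_eq_iff[OF assms(1) alpha_in[OF assms(1)]] alpha_neq[OF assms(1)] by simp
  then consider "tour_pos b < tour_pos (\<alpha> b)" | "tour_pos (\<alpha> b) < tour_pos (\<alpha> (\<alpha> b))"
    using alpha_alpha[OF assms(1)] by fastforce
  then show ?thesis
  proof cases
    case 1
    then show ?thesis using links_subtrees_word_pattern[OF assms 1] S by blast
  next
    case 2
    then show ?thesis
      using links_subtrees_word_pattern[OF alpha_in[OF assms(1)] links_subtrees_alpha[OF assms] 2] S
      by blast
  qed
qed

lemma Lambda_arcs_imp_links:
  assumes "e1 \<in> S" "e2 \<in> S" "Lambda_arc word e1 f" "Lambda_arc word f e2"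
  shows "\<exists>a1 a2 b. b \<in> B \<and> links_subtrees a1 a2 b"
proof -
  obtain a1 a2 where a: "down_flag a1" "ed a1 = e1" "down_flag a2" "ed a2 = e2"
    using tree_edge_down_flag_ex[OF assms(1)] tree_edge_down_flag_ex[OF assms(2)] by blast
  obtain x1 b where "x1 \<in> B" "b \<in> B" "e1 = ed x1" "f = ed b" "tour_pos x1 < tour_pos b"
    "tour_pos b < tour_pos (\<alpha> x1)" "tour_pos (\<alpha> x1) < tour_pos (\<alpha> b)"
    using Lambda_arc_tour_pos[OF assms(3)] .
  moreover have "x1 = \<alpha> a1" using down_flag_first_occurrence[OF a(1), of x1] a(2) calculation by simp
  ultimately have arc1: "b \<in> B" "f = ed b" "tour_pos (\<alpha> a1) < tour_pos b"
    "tour_pos b < tour_pos a1" "tour_pos a1 < tour_pos (\<alpha> b)"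
    using alpha_alpha down_flag_in[OF a(1)] by auto
  obtain y x2 where "y \<in> B" "x2 \<in> B" "f = ed y" "e2 = ed x2" "tour_pos y < tour_pos x2"
    "tour_pos x2 < tour_pos (\<alpha> y)" "tour_pos (\<alpha> y) < tour_pos (\<alpha> x2)"
    using Lambda_arc_tour_pos[OF assms(4)] .
  moreover have "x2 = \<alpha> a2" using down_flag_first_occurrence[OF a(3), of x2] a(4) calculation by simp
  moreover have "y = b \<or> y = \<alpha> b" using edge_eq_iff[OF arc1(1)] arc1(2) calculation(1,3) by simp
  ultimately have arc2: "tour_pos b < tour_pos (\<alpha> a2)" "tour_pos (\<alpha> a2) < tour_pos (\<alpha> b)"
    "tour_pos (\<alpha> b) < tour_pos a2"
    using arc1 alpha_alpha down_flag_in[OF a(3)] by auto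
  have "links_subtrees a1 a2 b"
    unfolding links_subtrees_def
    using down_flag_tour_interval(2)[OF a(1)] down_flag_tour_interval(2)[OF a(3)] a(1,3)
      arc1 arc2 alpha_in by auto
  then show ?thesis using arc1(1) by blast
qed

end

theorem lemma14:
  fixes B :: "'b set" and \<sigma> \<alpha> :: "'b \<Rightarrow> 'b" and r :: 'b and S :: "'b set set"
  assumes "is_map B \<sigma> \<alpha>"
    and "r \<in> B"
    and "spanning_tree B \<sigma> \<alpha> S"
  shows "(tremaux B \<sigma> \<alpha> r S \<longleftrightarrow>
           \<not> (\<exists>f e1 e2. e1 \<in> S \<and> e2 \<in> S \<and>
                 Lambda_arc (dow B \<sigma> \<alpha> r S) e1 f \<and> Lambda_arc (dow B \<sigma> \<alpha> r S) f e2))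
       \<and> (tremaux B \<sigma> \<alpha> r S \<longleftrightarrow>
           \<not> (\<exists>f e1 e2. e1 \<in> S \<and> e2 \<in> S \<and>
                 subseq [e1, f, e1, e2, f, e2] (dow B \<sigma> \<alpha> r S)))"
proof -
  interpret rooted_spanning_tree B \<sigma> \<alpha> r S
    using assms by unfold_locales
  have arcs: "(\<exists>f e1 e2. e1 \<in> S \<and> e2 \<in> S \<and> Lambda_arc word e1 f \<and> Lambda_arc word f e2) \<longleftrightarrow>
      (\<exists>a1 a2 b. b \<in> B \<and> links_subtrees a1 a2 b)"
    using Lambda_arcs_imp_links links_subtrees_imp_pattern subseq_pattern_imp_Lambda_arcs by meson
  have pattern: "(\<exists>f e1 e2. e1 \<in> S \<and> e2 \<in> S \<and> subseq [e1, f, e1, e2, f, e2] word) \<longleftrightarrow>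
      (\<exists>a1 a2 b. b \<in> B \<and> links_subtrees a1 a2 b)"
    using Lambda_arcs_imp_links links_subtrees_imp_pattern subseq_pattern_imp_Lambda_arcs by meson
  show ?thesis
    unfolding arcs pattern using tremaux_iff_no_links by simp
qed

end
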